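(* Let $\Omega\subset\mathbb{R}^N$ be a bounded smooth domain, $\gamma\ge0$, $q\in(0,\gamma+1)$, $a\in C(\overline\Omega)$, and let $F$ satisfy (F1) and (F2). Let $u$ be a nontrivial viscosity solution of $(\mathrm{P}_{a,q})$. Then there exists a nonempty open subdomain $\Omega'\subset\Omega^+=\{x\in\Omega:a(x)>0\}$ such that $u>0$ in $\Omega'$.
   Context: $\mathrm{Sym}(N)$ is the space of real symmetric $N\times N$ matrices. For $0<\lambda\le\Lambda$ the Pucci extremal operators are $\mathcal{M}^{+}_{\lambda,\Lambda}(X)=\Lambda\sum_{e_i>0}e_i(X)+\lambda\sum_{e_i<0}e_i(X)$ and $\mathcal{M}^{-}_{\lambda,\Lambda}(X)=\lambda\sum_{e_i>0}e_i(X)+\Lambda\sum_{e_i<0}e_i(X)$. (F1) There are constants $\Lambda\ge\lambda>0$ with $\mathcal{M}^-_{\lambda,\Lambda}(Y)\le F(x,X+Y)-F(x,X)\le\mathcal{M}^+_{\lambda,\Lambda}(Y)$ for all $x\in\Omega$, $X,Y\in\mathrm{Sym}(N)$, $Y\ge0$. (F2) $F(x,sX)=sF(x,X)$ for all $s>0$. Viscosity solutions: for continuous $G(x,r,p,X)$, $u\in C(\Omega)$ is a viscosity supersolution (resp. subsolution) of $G(x,u,Du,D^2u)=0$ if whenever $\phi\in C^2(\Omega)$ and $u-\phi$ has a local minimum (resp. maximum) at $x_0$, then $G(x_0,u(x_0),D\phi(x_0),D^2\phi(x_0))\le0$ (resp. $\ge0$); a solution is both. Problem $(\mathrm{P}_{a,q})$: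 find $u\in C(\overline{\Omega})$, $u\ge0$ in $\Omega$, $u=0$ on $\partial\Omega$, viscosity solution of $|Du|^\gamma F(x,D^2u)+a(x)u^q=0$ in $\Omega$. Nontrivial means $u\not\equiv0$. *)

theory Defs
  imports "HOL-Analysis.Analysis"
begin

definition Sym :: "(real^'n^'n) set" where
  "Sym = {X. transpose X = X}"

definition psd :: "real^'n^'n \<Rightarrow> bool" where
  "psd Y \<longleftrightarrow> (\<forall>v. 0 \<le> v \<bullet> (Y *v v))"

definition eigvals :: "real^'n^'n \<Rightarrow> real set" where
  "eigvals X = {e. \<exists>v. v \<noteq> 0 \<and> X *v v = e *s v}"

text \<open>multiplicity of an eigenvalue of a symmetric matrix = dimension of its eigenspace\<close>
definition eigmult :: "real^'n^'n \<Rightarrow> real \<Rightarrow> nat" where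
  "eigmult X e = dim {v. X *v v = e *s v}"

definition pos_eig_sum :: "real^'n^'n \<Rightarrow> real" where
  "pos_eig_sum X = (\<Sum>e\<in>{e\<in>eigvals X. e > 0}. e * real (eigmult X e))"

definition neg_eig_sum :: "real^'n^'n \<Rightarrow> real" where
  "neg_eig_sum X = (\<Sum>e\<in>{e\<in>eigvals X. e < 0}. e * real (eigmult X e))"

definition pucci_plus :: "real \<Rightarrow> real \<Rightarrow> real^'n^'n \<Rightarrow> real" where
  "pucci_plus lam Lam X = Lam * pos_eig_sum X + lam * neg_eig_sum X"

definition pucci_minus :: "real \<Rightarrow> real \<Rightarrow> real^'n^'n \<Rightarrow> real" where
  "pucci_minus lam Lam X = lam * pos_eig_sum X + Lam * neg_eig_sum X"

definition F1 :: "(real^'n) set \<Rightarrow> (real^'n \<Rightarrow> real^'n^'n \<Rightarrow> real) \<Rightarrow> bool" where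
  "F1 \<Omega> F \<longleftrightarrow> (\<exists>lam Lam. 0 < lam \<and> lam \<le> Lam \<and>
     (\<forall>x\<in>\<Omega>. \<forall>X\<in>Sym. \<forall>Y\<in>Sym. psd Y \<longrightarrow>
        pucci_minus lam Lam Y \<le> F x (X + Y) - F x X \<and>
        F x (X + Y) - F x X \<le> pucci_plus lam Lam Y))"

definition F2 :: "(real^'n) set \<Rightarrow> (real^'n \<Rightarrow> real^'n^'n \<Rightarrow> real) \<Rightarrow> bool" where
  "F2 \<Omega> F \<longleftrightarrow> (\<forall>x\<in>\<Omega>. \<forall>X\<in>Sym. \<forall>s::real. s > 0 \<longrightarrow> F x (s *\<^sub>R X) = s * F x X)"

coinductive Cinf :: "'a::euclidean_space set \<Rightarrow> ('a \<Rightarrow> real) \<Rightarrow> bool" for S where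
  "continuous_on S f \<Longrightarrow> (\<forall>x\<in>S. f differentiable (at x)) \<Longrightarrow>
   (\<forall>i\<in>Basis. Cinf S (\<lambda>x. frechet_derivative f (at x) i)) \<Longrightarrow> Cinf S f"

definition smooth_bounded_domain :: "'a::euclidean_space set \<Rightarrow> bool" where
  "smooth_bounded_domain \<Omega> \<longleftrightarrow> open \<Omega> \<and> connected \<Omega> \<and> \<Omega> \<noteq> {} \<and> bounded \<Omega> \<and>
     (\<forall>x0\<in>frontier \<Omega>. \<exists>r>0. \<exists>\<rho>. Cinf (ball x0 r) \<rho> \<and>
        (\<forall>x\<in>ball x0 r. frechet_derivative \<rho> (at x) \<noteq> (\<lambda>h. 0)) \<and>
        \<Omega> \<inter> ball x0 r = {x\<in>ball x0 r. \<rho> x < 0})"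

definition C2_on :: "(real^'n) set \<Rightarrow> (real^'n \<Rightarrow> real) \<Rightarrow> (real^'n \<Rightarrow> real^'n)
    \<Rightarrow> (real^'n \<Rightarrow> real^'n^'n) \<Rightarrow> bool" where
  "C2_on \<Omega> \<phi> D\<phi> H\<phi> \<longleftrightarrow>
     (\<forall>x\<in>\<Omega>. (\<phi> has_derivative (\<lambda>h. D\<phi> x \<bullet> h)) (at x) \<and>
              (D\<phi> has_derivative (\<lambda>h. H\<phi> x *v h)) (at x)) \<and>
     continuous_on \<Omega> H\<phi>"

definition visc_super :: "(real^'n) set \<Rightarrow>
    (real^'n \<Rightarrow> real \<Rightarrow> real^'n \<Rightarrow> real^'n^'n \<Rightarrow> real) \<Rightarrow> (real^'n \<Rightarrow> real) \<Rightarrow> bool" where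
  "visc_super \<Omega> G u \<longleftrightarrow> continuous_on \<Omega> u \<and>
     (\<forall>\<phi> D\<phi> H\<phi> x0. C2_on \<Omega> \<phi> D\<phi> H\<phi> \<and> x0 \<in> \<Omega> \<and>
        (\<exists>e>0. \<forall>y\<in>\<Omega> \<inter> ball x0 e. u x0 - \<phi> x0 \<le> u y - \<phi> y) \<longrightarrow>
        G x0 (u x0) (D\<phi> x0) (H\<phi> x0) \<le> 0)"

definition visc_sub :: "(real^'n) set \<Rightarrow>
    (real^'n \<Rightarrow> real \<Rightarrow> real^'n \<Rightarrow> real^'n^'n \<Rightarrow> real) \<Rightarrow> (real^'n \<Rightarrow> real) \<Rightarrow> bool" where
  "visc_sub \<Omega> G u \<longleftrightarrow> continuous_on \<Omega> u \<and>
     (\<forall>\<phi> D\<phi> H\<phi> x0. C2_on \<Omega> \<phi> D\<phi> H\<phi> \<and> x0 \<in> \<Omega> \<and>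
        (\<exists>e>0. \<forall>y\<in>\<Omega> \<inter> ball x0 e. u y - \<phi> y \<le> u x0 - \<phi> x0) \<longrightarrow>
        G x0 (u x0) (D\<phi> x0) (H\<phi> x0) \<ge> 0)"

definition visc_sol :: "(real^'n) set \<Rightarrow>
    (real^'n \<Rightarrow> real \<Rightarrow> real^'n \<Rightarrow> real^'n^'n \<Rightarrow> real) \<Rightarrow> (real^'n \<Rightarrow> real) \<Rightarrow> bool" where
  "visc_sol \<Omega> G u \<longleftrightarrow> visc_super \<Omega> G u \<and> visc_sub \<Omega> G u"

text \<open>real power t^g for t \<ge> 0, g \<ge> 0, with the convention t^0 = 1 (also for t = 0)\<close>
definition rpow :: "real \<Rightarrow> real \<Rightarrow> real" where
  "rpow t g = (if g = 0 then 1 else t powr g)"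

definition G_aq :: "(real^'n \<Rightarrow> real^'n^'n \<Rightarrow> real) \<Rightarrow> real \<Rightarrow> (real^'n \<Rightarrow> real) \<Rightarrow> real
    \<Rightarrow> real^'n \<Rightarrow> real \<Rightarrow> real^'n \<Rightarrow> real^'n^'n \<Rightarrow> real" where
  "G_aq F \<gamma> a q x r p X = rpow (norm p) \<gamma> * F x X + a x * rpow r q"

definition solves_P :: "(real^'n) set \<Rightarrow> (real^'n \<Rightarrow> real^'n^'n \<Rightarrow> real) \<Rightarrow> real
    \<Rightarrow> (real^'n \<Rightarrow> real) \<Rightarrow> real \<Rightarrow> (real^'n \<Rightarrow> real) \<Rightarrow> bool" where
  "solves_P \<Omega> F \<gamma> a q u \<longleftrightarrow> continuous_on (closure \<Omega>) u \<and> (\<forall>x\<in>\<Omega>. u x \<ge> 0) \<and>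
     (\<forall>x\<in>frontier \<Omega>. u x = 0) \<and> visc_sol \<Omega> (G_aq F \<gamma> a q) u"

end

theory Submission imports Defs begin

text \<open>Since u vanishes on the boundary and is positive somewhere, for a vertex z outside \<Omega> and a
  small d > 0 the function u + d |y - z|^2 attains its maximum over the closure of \<Omega> at an interior
  point x0. There u is touched from above by the paraboloid -d |y - z|^2, whose gradient is nonzero and
  whose Hessian -2d I is negative definite, so ellipticity and homogeneity make |D phi|^gamma F(x0, D^2 phi)
  negative. The subsolution inequality then forces a(x0) u(x0)^q > 0, so u and a are both positive at
  x0, and by continuity on a whole ball around x0.\<close>

lemma eigvals_mat_one: "eigvals (mat 1 :: real^'n^'n) = {1}"
proof -
  have "\<exists>v::real^'n. v \<noteq> 0" by (metis zero_neq_one vec_eq_iff zero_index one_index)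
  then show ?thesis unfolding eigvals_def by (auto simp: vec_eq_iff)
qed

lemma pucci_minus_mat_one_pos:
  assumes "0 < lam"
  shows "pucci_minus lam Lam (mat 1 :: real^'n^'n) > 0"
proof -
  have pos: "pos_eig_sum (mat 1 :: real^'n^'n) = real (eigmult (mat 1 :: real^'n^'n) 1)"
  proof -
    have "{e\<in>{1::real}. e > 0} = {1}" by auto
    then show ?thesis unfolding pos_eig_sum_def eigvals_mat_one by simp
  qed
  have neg: "neg_eig_sum (mat 1 :: real^'n^'n) = 0"
  proof -
    have no_neg: "{e\<in>{1::real}. e < 0} = {}" by auto
    show ?thesis unfolding neg_eig_sum_def eigvals_mat_one no_neg by simp
  qed
  have "eigmult (mat 1 :: real^'n^'n) 1 = dim (UNIV :: (real^'n) set)"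
    unfolding eigmult_def by simp
  then have "eigmult (mat 1 :: real^'n^'n) 1 > 0" by simp
  then show ?thesis using assms unfolding pucci_minus_def pos neg by simp
qed

lemma F_scaled_mat_one_neg:
  assumes "F1 \<Omega> F" "F2 \<Omega> F" "x \<in> \<Omega>" "0 < (c::real)"
  shows "F x ((- c) *\<^sub>R (mat 1 :: real^'n^'n)) < 0"
proof -
  obtain lam Lam where "0 < lam" and
    ellipticity: "\<forall>x\<in>\<Omega>. \<forall>X\<in>Sym. \<forall>Y\<in>Sym. psd Y \<longrightarrow> pucci_minus lam Lam Y \<le> F x (X + Y) - F x X"
    using assms(1) unfolding F1_def by blast
  define X :: "real^'n^'n" where "X = (-1) *\<^sub>R mat 1"
  have sym_mat_one: "(mat 1 :: real^'n^'n) \<in> Sym" unfolding Sym_def by (simp add: transpose_mat)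
  have sym_X: "X \<in> Sym" unfolding Sym_def X_def by (simp add: vec_eq_iff transpose_def mat_def)
  have sym_zero: "(0::real^'n^'n) \<in> Sym" unfolding Sym_def by (simp add: vec_eq_iff transpose_def)
  have "F x ((2::real) *\<^sub>R 0) = 2 * F x 0"
    using assms(2,3) sym_zero unfolding F2_def by (meson zero_less_numeral)
  moreover have "X + mat 1 = 0" unfolding X_def by (simp add: vec_eq_iff)
  ultimately have "F x (X + mat 1) = 0" by simp
  moreover have "pucci_minus lam Lam (mat 1 :: real^'n^'n) \<le> F x (X + mat 1) - F x X"
    using ellipticity assms(3) sym_X sym_mat_one by (simp add: psd_def)
  ultimately have "F x X < 0" using pucci_minus_mat_one_pos[OF \<open>0 < lam\<close>, of Lam, where 'n='n] by linarith
  moreover have "F x (c *\<^sub>R X) = c * F x X" using assms(2-4) sym_X unfolding F2_def by auto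
  ultimately show ?thesis using assms(4) unfolding X_def by (simp add: mult_pos_neg)
qed

lemma C2_on_concave_paraboloid:
  "C2_on S (\<lambda>y. - d * ((y - z) \<bullet> (y - z))) (\<lambda>y. (-2 * d) *\<^sub>R (y - z))
     (\<lambda>y. (-2 * d) *\<^sub>R (mat 1 :: real^'n^'n))"
  unfolding C2_on_def
proof (intro conjI ballI)
  fix x :: "real^'n"
  show "((\<lambda>y. - d * ((y - z) \<bullet> (y - z))) has_derivative (\<lambda>h. (-2 * d) *\<^sub>R (x - z) \<bullet> h)) (at x)"
    by (auto intro!: derivative_eq_intros simp: inner_commute algebra_simps)
  show "((\<lambda>y. (-2 * d) *\<^sub>R (y - z)) has_derivative (\<lambda>h. ((-2 * d) *\<^sub>R mat 1) *v h)) (at x)"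
    unfolding scaleR_matrix_vector_assoc[symmetric] by (auto intro!: derivative_eq_intros)
qed simp

text \<open>The vertex z lies outside the closure of \<Omega>, so that the gradient of the paraboloid never
  vanishes in \<Omega>.\<close>

lemma obtain_interior_max_plus_paraboloid:
  fixes u :: "real^'n \<Rightarrow> real"
  assumes "open \<Omega>" "bounded \<Omega>" "continuous_on (closure \<Omega>) u" "\<forall>x\<in>frontier \<Omega>. u x = 0"
    and "x1 \<in> \<Omega>" "u x1 > 0"
  obtains z d x0 where "z \<notin> closure \<Omega>" "d > 0" "x0 \<in> \<Omega>"
    "\<forall>y\<in>closure \<Omega>. u y + d * ((y - z) \<bullet> (y - z)) \<le> u x0 + d * ((x0 - z) \<bullet> (x0 - z))"
proof -
  have bounded_closure: "bounded (closure \<Omega>)" using assms(2) by (rule bounded_closure)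
  obtain z where z: "z \<notin> closure \<Omega>"
    using bounded_closure not_bounded_UNIV by (metis subsetI bounded_subset)
  obtain R where R: "\<And>y. y \<in> closure \<Omega> \<Longrightarrow> norm (y - z) \<le> R"
    using bounded_closure bounded_any_center[of "closure \<Omega>" z] by (auto simp: dist_norm norm_minus_commute)
  define d where "d = u x1 / (2 * (R\<^sup>2 + 1))"
  have "d > 0" unfolding d_def using assms(6) by (intro divide_pos_pos) (auto intro: add_nonneg_pos)
  have "d * R\<^sup>2 < u x1"
  proof -
    have "d * R\<^sup>2 \<le> d * (R\<^sup>2 + 1)" using \<open>d > 0\<close> by simp
    also have "\<dots> = u x1 / 2"
      using add_nonneg_pos[of "R\<^sup>2" 1] unfolding d_def by (simp add: field_simps)
    finally show ?thesis using assms(6) by simp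
  qed
  define \<psi> where "\<psi> y = u y + d * ((y - z) \<bullet> (y - z))" for y
  have "continuous_on (closure \<Omega>) \<psi>" unfolding \<psi>_def by (intro continuous_intros assms(3))
  moreover have "compact (closure \<Omega>)" using bounded_closure by (simp add: compact_eq_bounded_closed)
  moreover have "closure \<Omega> \<noteq> {}" using assms(5) closure_subset by blast
  ultimately obtain x0 where x0: "x0 \<in> closure \<Omega>" "\<forall>y\<in>closure \<Omega>. \<psi> y \<le> \<psi> x0"
    using continuous_attains_sup by metis
  have "x0 \<in> \<Omega>"
  proof (rule ccontr)
    assume "x0 \<notin> \<Omega>"
    then have "u x0 = 0" using x0(1) assms(1,4) by (simp add: frontier_def interior_open)
    then have "\<psi> x0 = d * (norm (x0 - z))\<^sup>2" unfolding \<psi>_def by (simp add: power2_norm_eq_inner)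
    also have "\<dots> \<le> d * R\<^sup>2" using R[OF x0(1)] \<open>d > 0\<close> by (simp add: power_mono)
    also have "\<dots> < u x1" by fact
    also have "u x1 \<le> \<psi> x1" unfolding \<psi>_def using \<open>d > 0\<close> by simp
    also have "\<psi> x1 \<le> \<psi> x0" using x0(2) assms(5) closure_subset by blast
    finally show False by simp
  qed
  then show thesis using that z \<open>d > 0\<close> x0(2) unfolding \<psi>_def by blast
qed

lemma visc_sub_max_plus_paraboloid_source_pos:
  assumes "F1 \<Omega> F" "F2 \<Omega> F" "0 < q" "visc_sub \<Omega> (G_aq F \<gamma> a q) u"
    and "x0 \<in> \<Omega>" "u x0 \<ge> 0" "x0 \<noteq> z" "d > 0"
    and "\<forall>y\<in>\<Omega>. u y + d * ((y - z) \<bullet> (y - z)) \<le> u x0 + d * ((x0 - z) \<bullet> (x0 - z))"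
  shows "u x0 > 0 \<and> a x0 > 0"
proof -
  let ?D\<phi> = "(-2 * d) *\<^sub>R (x0 - z)" and ?H\<phi> = "(-2 * d) *\<^sub>R (mat 1 :: real^'n^'n)"
  have touching: "\<exists>e>0. \<forall>y\<in>\<Omega> \<inter> ball x0 e.
      u y - - d * ((y - z) \<bullet> (y - z)) \<le> u x0 - - d * ((x0 - z) \<bullet> (x0 - z))"
    using assms(9) by (intro exI[of _ 1]) auto
  have "G_aq F \<gamma> a q x0 (u x0) ?D\<phi> ?H\<phi> \<ge> 0"
    using assms(4,5) C2_on_concave_paraboloid touching unfolding visc_sub_def by blast
  moreover have "rpow (norm ?D\<phi>) \<gamma> > 0" using assms(7,8) by (simp add: rpow_def)
  moreover have "F x0 ?H\<phi> < 0" using F_scaled_mat_one_neg[OF assms(1,2,5), of "2 * d"] assms(8) by simp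
  ultimately have "a x0 * rpow (u x0) q > 0"
    unfolding G_aq_def by (smt (verit) mult_pos_neg)
  moreover have "rpow (u x0) q \<ge> 0" by (simp add: rpow_def)
  ultimately have "a x0 > 0" and "rpow (u x0) q \<noteq> 0"
    by (auto simp: zero_less_mult_iff)
  moreover have "rpow 0 q = 0" using assms(3) by (simp add: rpow_def)
  ultimately show ?thesis using assms(6) by (metis less_eq_real_def)
qed

lemma open_pos_both:
  assumes "open S" "continuous_on S f" "continuous_on S g"
  shows "open {x\<in>S. f x > (0::real) \<and> g x > (0::real)}"
proof -
  have "{x\<in>S. f x > 0 \<and> g x > 0} = (S \<inter> f -` {0<..}) \<inter> (S \<inter> g -` {0<..})" by auto
  then show ?thesis
    using continuous_open_preimage[OF assms(2,1)] continuous_open_preimage[OF assms(3,1)] by auto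
qed

theorem mainTheorem7:
  fixes \<Omega> :: "(real^'n) set" and F :: "real^'n \<Rightarrow> real^'n^'n \<Rightarrow> real"
    and \<gamma> q :: real and a u :: "real^'n \<Rightarrow> real"
  assumes "smooth_bounded_domain \<Omega>"
    and "\<gamma> \<ge> 0" and "0 < q" and "q < \<gamma> + 1"
    and "continuous_on (closure \<Omega>) a"
    and "continuous_on (\<Omega> \<times> Sym) (\<lambda>(x, X). F x X)"
    and "F1 \<Omega> F" and "F2 \<Omega> F"
    and "solves_P \<Omega> F \<gamma> a q u"
    and "\<exists>x\<in>\<Omega>. u x \<noteq> 0"
  shows "\<exists>\<Omega>'. open \<Omega>' \<and> connected \<Omega>' \<and> \<Omega>' \<noteq> {} \<and> \<Omega>' \<subseteq> {x\<in>\<Omega>. a x > 0} \<and>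
           (\<forall>x\<in>\<Omega>'. u x > 0)"
proof -
  have "open \<Omega>" "bounded \<Omega>" using assms(1) unfolding smooth_bounded_domain_def by auto
  have u: "continuous_on (closure \<Omega>) u" "\<forall>x\<in>\<Omega>. u x \<ge> 0" "\<forall>x\<in>frontier \<Omega>. u x = 0"
    "visc_sub \<Omega> (G_aq F \<gamma> a q) u"
    using assms(9) unfolding solves_P_def visc_sol_def by auto
  obtain x1 where "x1 \<in> \<Omega>" "u x1 > 0" using assms(10) u(2) by force
  then obtain z d x0 where "z \<notin> closure \<Omega>" "d > 0" "x0 \<in> \<Omega>"
    "\<forall>y\<in>closure \<Omega>. u y + d * ((y - z) \<bullet> (y - z)) \<le> u x0 + d * ((x0 - z) \<bullet> (x0 - z))"
    using obtain_interior_max_plus_paraboloid[OF \<open>open \<Omega>\<close> \<open>bounded \<Omega>\<close> u(1,3)] by blast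
  moreover from this have "x0 \<noteq> z" using closure_subset by blast
  ultimately have "x0 \<in> {x\<in>\<Omega>. u x > 0 \<and> a x > 0}"
    using visc_sub_max_plus_paraboloid_source_pos[OF assms(7,8,3) u(4)] u(2) closure_subset by blast
  moreover have "open {x\<in>\<Omega>. u x > 0 \<and> a x > 0}"
    using \<open>open \<Omega>\<close> u(1) assms(5) closure_subset by (intro open_pos_both) (auto intro: continuous_on_subset)
  ultimately obtain r where "r > 0" "ball x0 r \<subseteq> {x\<in>\<Omega>. u x > 0 \<and> a x > 0}"
    by (meson openE)
  then show ?thesis by (intro exI[of _ "ball x0 r"]) (auto simp: convex_connected)
qed

end
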